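(* Let $k\ge 2$ and let $\mathbb{R}^+=H_1\sqcup\cdots\sqcup H_k$ be a partition of the positive reals into pairwise disjoint nonempty subsets, each closed under addition and multiplication. Then at least one of the sets $H_i$ is not Lebesgue measurable. *)

theory Defs
  imports "HOL-Analysis.Analysis"
begin

end

theory Submission
  imports Defs
begin

(* If all H i were measurable, some H i would have positive measure, and by Steinhaus' theorem
   H i + H i \<subseteq> H i would contain an interval (\<alpha>, \<beta>). For x in another class H j and a
   rational p / r with p x / r in (\<alpha>, \<beta>), the point p x lies in H j, and also in H i as r times
   an element of the interval: the classes are not disjoint.

   Steinhaus' theorem comes from a density argument: a compact C of positive measure lies in an
   open U with measure U < 4/3 measure C; the cells of a grid finer than dist(C, -U) that meet C
   lie in U, so C has density above 3/4 in some interval I, and then C \<inter> I meets its reflection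
   s - (C \<inter> I) for every s near twice the midpoint of I. *)

lemma lmeasurable_outer_open:
  assumes "S \<in> lmeasurable" "e > 0"
  obtains U where "open U" "S \<subseteq> U" "U \<in> lmeasurable"
    and "measure lebesgue U < measure lebesgue S + e"
proof -
  obtain U where U: "open U" "S \<subseteq> U" "U - S \<in> lmeasurable"
    and small: "emeasure lebesgue (U - S) < ennreal e"
    using sets_lebesgue_outer_open[of S e] assms by auto
  have "U = S \<union> (U - S)" using U(2) by auto
  then have "U \<in> lmeasurable" "measure lebesgue U = measure lebesgue S + measure lebesgue (U - S)"
    using measure_Un3[OF assms(1) U(3)] assms(1) U(3)
    by (metis fmeasurable.Un, simp add: Int_Diff_disjoint)
  moreover have "measure lebesgue (U - S) < e"
    using U(3) small assms(2) by (metis emeasure_eq_measure2 ennreal_less_iff measure_nonneg)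
  ultimately show ?thesis using U(1,2) that by auto
qed

lemma not_negligible_imp_compact_subset:
  assumes "S \<in> sets lebesgue" "\<not> negligible S"
  obtains C where "compact C" "C \<subseteq> S" "\<not> negligible C"
proof -
  obtain K C where "negligible K" "\<And>n::nat. compact (C n)" "S = (\<Union>n. C n) \<union> K"
    using lebesgue_regular_inner[OF assms(1)] by metis
  moreover have "C n \<subseteq> S" for n using \<open>S = _\<close> by blast
  moreover have "\<exists>n. \<not> negligible (C n)"
  proof (rule ccontr)
    assume "\<not> (\<exists>n. \<not> negligible (C n))"
    then have "negligible (\<Union>n. C n)" by (intro negligible_countable_Union) auto
    then show False using assms(2) \<open>negligible K\<close> \<open>S = _\<close> by simp
  qed
  ultimately show ?thesis using that by blast
qed

lemma compact_has_dense_interval: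
  fixes K U :: "real set"
  assumes "compact K" "open U" "K \<subseteq> U" "U \<in> lmeasurable"
    and "\<theta> * measure lebesgue U < measure lebesgue K"
  shows "\<exists>c d. 0 < d \<and> \<theta> * d < measure lebesgue (K \<inter> {c..c+d})"
proof (rule ccontr)
  assume "\<not> ?thesis"
  then have sparse: "measure lebesgue (K \<inter> {c..c+d}) \<le> \<theta> * d" if "0 < d" for c d
    using that by (meson not_less)
  have "0 \<le> \<theta>" using sparse[of 1 0] measure_nonneg[of lebesgue] by (smt (verit))
  have "closed (- U)" "K \<inter> - U = {}" using assms(2,3) by auto
  then obtain \<delta> where "0 < \<delta>" and \<delta>: "\<forall>x\<in>K. \<forall>y\<in>- U. \<delta> \<le> dist x y"
    using separate_compact_closed[OF \<open>compact K\<close>] by blast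
  obtain a where "K \<subseteq> cbox (-a) a"
    using bounded_subset_cbox_symmetric[OF compact_imp_bounded[OF \<open>compact K\<close>]] by blast
  then have K_sub: "K \<subseteq> {-a..a}" by simp
  define e where "e = \<delta> / 2"
  have "0 < e" "e < \<delta>" using \<open>0 < \<delta>\<close> by (auto simp: e_def)
  define cell where "cell m = {x. \<lfloor>x / e\<rfloor> = m}" for m :: int
  have cell_eq: "cell m = {m * e ..< m * e + e}" for m
    using \<open>0 < e\<close> by (auto simp: cell_def floor_eq_iff field_simps)
  have cell: "cell m \<in> lmeasurable" "measure lebesgue (cell m) = e" for m
    unfolding cell_eq using \<open>0 < e\<close>
    by (auto intro: bounded_set_imp_lmeasurable simp: measure_completion)
  define M where "M = (\<lambda>x. \<lfloor>x / e\<rfloor>) ` K"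
  have "M \<subseteq> {\<lfloor>-a / e\<rfloor> .. \<lfloor>a / e\<rfloor>}"
  proof
    fix m assume "m \<in> M"
    then obtain x where "m = \<lfloor>x / e\<rfloor>" "-a \<le> x" "x \<le> a" using K_sub by (auto simp: M_def)
    then show "m \<in> {\<lfloor>-a / e\<rfloor> .. \<lfloor>a / e\<rfloor>}"
      using \<open>0 < e\<close> by (auto intro!: floor_mono simp: divide_right_mono field_simps)
  qed
  then have "finite M" by (rule finite_subset) simp
  have cells_disjoint: "pairwise (\<lambda>m n. disjnt (cell m) (cell n)) M"
    by (auto simp: pairwise_def disjnt_def cell_def)
  have K_eq: "K = (\<Union>m\<in>M. K \<inter> cell m)" by (auto simp: M_def cell_def)
  have cells_in_U: "cell m \<subseteq> U" if m: "m \<in> M" for m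
  proof
    fix y assume "y \<in> cell m"
    obtain x where "x \<in> K" "x \<in> cell m" using m by (auto simp: M_def cell_def)
    then have "dist x y < \<delta>"
      using \<open>y \<in> cell m\<close> \<open>e < \<delta>\<close> by (auto simp: cell_eq dist_real_def abs_less_iff)
    then show "y \<in> U" using \<delta> \<open>x \<in> K\<close> by force
  qed
  have K_cell: "K \<inter> cell m \<in> lmeasurable" for m
    using cell lmeasurable_compact[OF \<open>compact K\<close>] by blast
  have "measure lebesgue K = measure lebesgue (\<Union>m\<in>M. K \<inter> cell m)"
    using K_eq by (rule arg_cong)
  also have "\<dots> = (\<Sum>m\<in>M. measure lebesgue (K \<inter> cell m))"
    using \<open>finite M\<close> K_cell cells_disjoint
    by (intro measure_UNION') (auto simp: pairwise_def disjnt_def)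
  also have "\<dots> \<le> (\<Sum>m\<in>M. \<theta> * e)"
  proof (rule sum_mono)
    fix m
    have "K \<inter> cell m \<subseteq> K \<inter> {m * e .. m * e + e}" by (auto simp: cell_eq)
    then have "measure lebesgue (K \<inter> cell m) \<le> measure lebesgue (K \<inter> {m * e .. m * e + e})"
      using \<open>compact K\<close> K_cell
      by (intro measure_mono_fmeasurable) (auto intro: lmeasurable_compact compact_Int_closed)
    also have "\<dots> \<le> \<theta> * e" using sparse \<open>0 < e\<close> by blast
    finally show "measure lebesgue (K \<inter> cell m) \<le> \<theta> * e" .
  qed
  also have "\<dots> = \<theta> * measure lebesgue (\<Union>m\<in>M. cell m)"
    using measure_UNION'[OF \<open>finite M\<close> cell(1) cells_disjoint]
    by (simp add: cell sum_distrib_left)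
  also have "\<dots> \<le> \<theta> * measure lebesgue U"
    using cells_in_U cell(1) \<open>finite M\<close> \<open>U \<in> lmeasurable\<close> \<open>0 \<le> \<theta>\<close>
    by (intro mult_left_mono measure_mono_fmeasurable) auto
  finally show False using assms(5) by linarith
qed

lemma dense_subset_meets_reflection:
  fixes B :: "real set"
  assumes "compact B" and B_sub: "B \<subseteq> {c..c+d}" and dense: "3/4 * d < measure lebesgue B"
    and s: "s \<in> {2*c + 3/4*d <..< 2*c + 5/4*d}"
  shows "\<exists>y\<in>B. s - y \<in> B"
proof (rule ccontr)
  assume no_meet: "\<not> (\<exists>y\<in>B. s - y \<in> B)"
  define R where "R = (\<lambda>y. s - y) ` B"
  have disjoint: "B \<inter> R = {}" using no_meet by (auto simp: R_def)
  have "R = (\<lambda>y. (-1) *\<^sub>R y + s) ` B" by (auto simp: R_def)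
  then have "measure lebesgue R = measure lebesgue B"
    using measure_lebesgue_affine[of "-1" s B] by simp
  have B: "B \<in> lmeasurable" and R: "R \<in> lmeasurable"
    using \<open>compact B\<close> unfolding R_def
    by (auto intro!: lmeasurable_compact compact_continuous_image continuous_intros)
  have "B \<union> R \<subseteq> {c - d/4 .. c + 5/4*d}"
  proof -
    have "s - y \<in> {c - d/4 .. c + 5/4*d}" if "y \<in> B" for y
    proof -
      have "c \<le> y" "y \<le> c + d" using B_sub that by auto
      then show ?thesis using s by simp
    qed
    then show ?thesis using B_sub s by (auto simp: R_def)
  qed
  then have "measure lebesgue (B \<union> R) \<le> 3/2 * d"
    using B R s measure_mono_fmeasurable[of "B \<union> R" "{c - d/4 .. c + 5/4*d}" lebesgue]
    by auto
  moreover have "measure lebesgue (B \<union> R) = 2 * measure lebesgue B"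
    using measure_Un3[OF B R] disjoint \<open>measure lebesgue R = _\<close> by simp
  ultimately show False using dense by linarith
qed

lemma Steinhaus_sumset:
  fixes A :: "real set"
  assumes "A \<in> sets lebesgue" "\<not> negligible A"
  shows "\<exists>\<alpha> \<beta>. \<alpha> < \<beta> \<and> {\<alpha><..<\<beta>} \<subseteq> {x + y | x y. x \<in> A \<and> y \<in> A}"
proof -
  obtain C where "compact C" "C \<subseteq> A" "\<not> negligible C"
    using not_negligible_imp_compact_subset[OF assms] by blast
  have "C \<in> lmeasurable" using \<open>compact C\<close> by (rule lmeasurable_compact)
  with \<open>\<not> negligible C\<close> have "0 < measure lebesgue C"
    by (simp add: negligible_iff_measure zero_less_measure_iff)
  then have "0 < measure lebesgue C / 3" by simp
  then obtain U where U: "open U" "C \<subseteq> U" "U \<in> lmeasurable"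
    and "measure lebesgue U < measure lebesgue C + measure lebesgue C / 3"
    using lmeasurable_outer_open[OF \<open>C \<in> lmeasurable\<close>] by blast
  then have "3/4 * measure lebesgue U < measure lebesgue C" by linarith
  then obtain c d where "0 < d" and dense: "3/4 * d < measure lebesgue (C \<inter> {c..c+d})"
    using compact_has_dense_interval[OF \<open>compact C\<close> U] by blast
  have "{2*c + 3/4*d <..< 2*c + 5/4*d} \<subseteq> {x + y | x y. x \<in> A \<and> y \<in> A}"
  proof
    fix s assume "s \<in> {2*c + 3/4*d <..< 2*c + 5/4*d}"
    then obtain y where "y \<in> C" "s - y \<in> C"
      using dense_subset_meets_reflection[of "C \<inter> {c..c+d}" c d s] dense \<open>compact C\<close>
      by (auto simp: compact_Int_closed)
    then show "s \<in> {x + y | x y. x \<in> A \<and> y \<in> A}"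
      using \<open>C \<subseteq> A\<close> by force
  qed
  moreover have "2*c + 3/4*d < 2*c + 5/4*d" using \<open>0 < d\<close> by simp
  ultimately show ?thesis by blast
qed

lemma add_closed_of_nat_mult:
  fixes S :: "'a::semiring_1 set"
  assumes add: "\<And>x y. x \<in> S \<Longrightarrow> y \<in> S \<Longrightarrow> x + y \<in> S" and z: "z \<in> S" and n: "n \<ge> 1"
  shows "of_nat n * z \<in> S"
  using n
proof (induction n rule: dec_induct)
  case base
  then show ?case using z by simp
next
  case (step m)
  then show ?case using add[OF step.IH z] by (simp add: algebra_simps)
qed

lemma add_closed_pos_sets_meet:
  fixes S T :: "real set"
  assumes S_pos: "S \<subseteq> {0<..}" and T_pos: "T \<subseteq> {0<..}" and "T \<noteq> {}"
    and add_S: "\<And>x y. x \<in> S \<Longrightarrow> y \<in> S \<Longrightarrow> x + y \<in> S"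
    and add_T: "\<And>x y. x \<in> T \<Longrightarrow> y \<in> T \<Longrightarrow> x + y \<in> T"
    and "\<alpha> < \<beta>" and interval: "{\<alpha><..<\<beta>} \<subseteq> S"
  shows "S \<inter> T \<noteq> {}"
proof -
  obtain x where x: "x \<in> T" "0 < x" using \<open>T \<noteq> {}\<close> T_pos by blast
  have "(\<alpha> + \<beta>) / 2 \<in> S" using interval \<open>\<alpha> < \<beta>\<close> by auto
  then have "0 < \<beta>" using S_pos \<open>\<alpha> < \<beta>\<close> by force
  then obtain q where q: "q \<in> \<rat>" "max \<alpha> 0 / x < q" "q < \<beta> / x"
    using Rats_dense_in_real[of "max \<alpha> 0 / x" "\<beta> / x"] \<open>\<alpha> < \<beta>\<close> x(2)
    by (auto simp: divide_strict_right_mono)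
  obtain p r :: nat where "r \<noteq> 0" and "\<bar>q\<bar> = real p / real r"
    using Rats_abs_nat_div_natE[OF q(1)] by metis
  moreover have "0 < q" using q(2) x(2) by (smt (verit) divide_nonneg_pos)
  ultimately have q_eq: "q = real p / real r" and "p \<ge> 1" "r \<ge> 1"
    by (auto simp: zero_less_divide_iff)
  have "q * x \<in> {\<alpha><..<\<beta>}" using q x(2) by (auto simp: field_simps)
  then have "real r * (q * x) \<in> S"
    using add_closed_of_nat_mult[OF add_S _ \<open>r \<ge> 1\<close>] interval by blast
  moreover have "real p * x \<in> T"
    using add_closed_of_nat_mult[OF add_T x(1) \<open>p \<ge> 1\<close>] .
  moreover have "real r * (q * x) = real p * x" using q_eq \<open>r \<ge> 1\<close> by simp
  ultimately show ?thesis by auto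
qed

theorem theorem3p3:
  fixes k :: nat and H :: "nat \<Rightarrow> real set"
  assumes "k \<ge> 2"
    and "(\<Union>i\<in>{1..k}. H i) = {x. x > 0}"
    and "\<And>i j. i \<in> {1..k} \<Longrightarrow> j \<in> {1..k} \<Longrightarrow> i \<noteq> j \<Longrightarrow> H i \<inter> H j = {}"
    and "\<And>i. i \<in> {1..k} \<Longrightarrow> H i \<noteq> {}"
    and "\<And>i x y. i \<in> {1..k} \<Longrightarrow> x \<in> H i \<Longrightarrow> y \<in> H i \<Longrightarrow> x + y \<in> H i"
    and "\<And>i x y. i \<in> {1..k} \<Longrightarrow> x \<in> H i \<Longrightarrow> y \<in> H i \<Longrightarrow> x * y \<in> H i"
  shows "\<exists>i\<in>{1..k}. H i \<notin> sets lebesgue"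
proof (rule ccontr)
  assume all_measurable: "\<not> ?thesis"
  have H_pos: "H i \<subseteq> {0<..}" if "i \<in> {1..k}" for i using assms(2) that by auto
  have "\<not> negligible {0::real<..}" by (rule open_not_negligible) auto
  then have "\<not> negligible (\<Union>i\<in>{1..k}. H i)" using assms(2) by (simp add: greaterThan_def)
  then obtain i where i: "i \<in> {1..k}" "\<not> negligible (H i)"
    using negligible_Union[of "H ` {1..k}"] by (metis finite_atLeastAtMost finite_imageI imageE)
  have "H i \<in> sets lebesgue" using all_measurable i(1) by blast
  then obtain \<alpha> \<beta> where "\<alpha> < \<beta>"
    and interval: "{\<alpha><..<\<beta>} \<subseteq> {x + y | x y. x \<in> H i \<and> y \<in> H i}"
    using Steinhaus_sumset i(2) by blast
  have "{x + y | x y. x \<in> H i \<and> y \<in> H i} \<subseteq> H i" using assms(5)[OF i(1)] by blast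
  with interval have "{\<alpha><..<\<beta>} \<subseteq> H i" by (rule subset_trans)
  define j where "j = (if i = 1 then 2 else 1 :: nat)"
  have j: "j \<in> {1..k}" "i \<noteq> j" using assms(1) i(1) by (auto simp: j_def)
  have "H i \<inter> H j \<noteq> {}"
    by (rule add_closed_pos_sets_meet[OF H_pos[OF i(1)] H_pos[OF j(1)] assms(4)[OF j(1)]
          assms(5)[OF i(1)] assms(5)[OF j(1)] \<open>\<alpha> < \<beta>\<close> \<open>{\<alpha><..<\<beta>} \<subseteq> H i\<close>])
  then show False using assms(3)[OF i(1) j] by blast
qed

end
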